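(* In the setting described in the context, define $\Delta_u(\eta,e_1,e_2):=\hat u(\eta,e_1,e_2)-\hat u(\eta,0,0)$. Fix $\delta>0$. For every $R\in(0,\min\{a,b\})$ there exists $C_R>0$ such that $$|\Delta_u(\eta,e_1,e_2)|\le C_R(|e_1|+|e_2|)$$ for all $\eta\in\mathcal T_R:=\{\eta\in\mathbb{R}^2: r(\eta)\le R\}$ and all $e_1,e_2\in\mathbb{R}$ with $|e_1|+|e_2|\le\delta$.
   Context: Let $A>0$. For $i\in\{1,2\}$ let $k_i,\mu_i,g_i:[0,A]\to\mathbb{R}_{\ge0}$ be continuous with positive integrals over $[0,A]$, and let $\zeta_i>0$ solve $\int_0^Ak_i(a)e^{-\int_0^a(\zeta_i+\mu_i(s))ds}da=1$. For continuous nonnegative $k,\mu,g$ and $\zeta\in\mathbb{R}$: $\mathcal G_\kappa(k,\mu,\zeta)=\int_0^A a k(a)e^{-\int_0^a(\zeta+\mu)}da$, $\mathcal G_\gamma(g,\zeta,\mu)=\int_0^A g(a)e^{-\int_0^a(\zeta+\mu)}da$, $\mathcal G_\pi(k,\mu,\zeta)(a)=\int_a^A k(s)e^{\int_s^a(\zeta+\mu(l))dl}ds$. Let $\langle f,h\rangle=\int_0^Afh$, $n_i(a)=e^{-\int_0^a(\zeta_i+\mu_i)}$, $\gamma_1=\mathcal G_\gamma(g_1,\zeta_2,\mu_2)$, $\gamma_2=\mathcal G_\gamma(g_2,\zeta_1,\mu_1)$. Let $\varepsilon>0$, $\beta>\frac{\varepsilon}{4(1+\varepsilon)}$, $x_1^*(0)>\frac{1}{\zeta_2\gamma_2}$,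 $a:=\frac{1}{x_1^*(0)\gamma_2}$, $b:=\zeta_1-\zeta_2+a=\gamma_1x_2^*(0)>0$ (defining $x_2^*(0)>0$). For $e_1,e_2\in\mathbb{R}$: $\hat\zeta_i=\zeta_i-e_i$, $\hat\kappa_i=\mathcal G_\kappa(k_i,\mu_i,\hat\zeta_i)$, $\hat\gamma_1=\mathcal G_\gamma(g_1,\hat\zeta_2,\mu_2)$, $\hat\gamma_2=\mathcal G_\gamma(g_2,\hat\zeta_1,\mu_1)$, $\hat\pi_{0,i}=\mathcal G_\pi(k_i,\mu_i,\hat\zeta_i)$, and $\hat u(\eta,e_1,e_2)=\hat\zeta_2-\frac{1}{x_1^*(0)\hat\gamma_2}+\beta\big[(1+\varepsilon)(\hat\zeta_2-\hat\zeta_1)-\frac{\varepsilon}{x_1^*(0)\hat\gamma_2}-\frac{\hat\kappa_1}{\hat\gamma_2\langle\hat\pi_{0,1},n_1\rangle x_1^*(0)}e^{-\eta_1}+(1+\varepsilon)\frac{\hat\gamma_1\langle\hat\pi_{0,2},n_2\rangle x_2^*(0)}{\hat\kappa_2}e^{\eta_2}\big]$ for $\eta=(\eta_1,\eta_2)\in\mathbb{R}^2$. Also $\phi_1(\eta_1)=a(1-e^{-\eta_1})$, $\phi_2(\eta_2)=b(e^{\eta_2}-1)$, $r(\eta)=\sqrt{\phi_1(\eta_1)^2+\phi_2(\eta_2)^2}$. *)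

theory Defs
  imports "HOL-Analysis.Analysis"
begin

definition surv :: "(real \<Rightarrow> real) \<Rightarrow> real \<Rightarrow> real \<Rightarrow> real" where
  "surv mu zeta a = exp (- integral {0..a} (\<lambda>s. zeta + mu s))"

definition G_kappa :: "real \<Rightarrow> (real \<Rightarrow> real) \<Rightarrow> (real \<Rightarrow> real) \<Rightarrow> real \<Rightarrow> real" where
  "G_kappa A k mu zeta = integral {0..A} (\<lambda>a. a * k a * surv mu zeta a)"

definition G_gamma :: "real \<Rightarrow> (real \<Rightarrow> real) \<Rightarrow> real \<Rightarrow> (real \<Rightarrow> real) \<Rightarrow> real" where
  "G_gamma A g zeta mu = integral {0..A} (\<lambda>a. g a * surv mu zeta a)"

text \<open>G_pi(k,mu,zeta)(a) = int_a^A k(s) exp(int_s^a (zeta+mu)) ds; for s \<ge> a,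
  int_s^a (zeta+mu) = - int_a^s (zeta+mu).\<close>
definition G_pi :: "real \<Rightarrow> (real \<Rightarrow> real) \<Rightarrow> (real \<Rightarrow> real) \<Rightarrow> real \<Rightarrow> real \<Rightarrow> real" where
  "G_pi A k mu zeta a = integral {a..A} (\<lambda>s. k s * exp (- integral {a..s} (\<lambda>l. zeta + mu l)))"

definition ip :: "real \<Rightarrow> (real \<Rightarrow> real) \<Rightarrow> (real \<Rightarrow> real) \<Rightarrow> real" where
  "ip A f h = integral {0..A} (\<lambda>a. f a * h a)"

definition u_hat ::
  "real \<Rightarrow> (real \<Rightarrow> real) \<Rightarrow> (real \<Rightarrow> real) \<Rightarrow> (real \<Rightarrow> real) \<Rightarrow>
   (real \<Rightarrow> real) \<Rightarrow> (real \<Rightarrow> real) \<Rightarrow> (real \<Rightarrow> real) \<Rightarrow>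
   real \<Rightarrow> real \<Rightarrow> real \<Rightarrow> real \<Rightarrow> real \<Rightarrow> real \<Rightarrow>
   real \<Rightarrow> real \<Rightarrow> real \<Rightarrow> real \<Rightarrow> real" where
  "u_hat A k1 mu1 g1 k2 mu2 g2 zeta1 zeta2 x1 x2 \<epsilon> \<beta> eta1 eta2 e1 e2 =
     (let z1 = zeta1 - e1; z2 = zeta2 - e2;
          ka1 = G_kappa A k1 mu1 z1; ka2 = G_kappa A k2 mu2 z2;
          ga1 = G_gamma A g1 z2 mu2; ga2 = G_gamma A g2 z1 mu1;
          p1 = G_pi A k1 mu1 z1; p2 = G_pi A k2 mu2 z2;
          n1 = surv mu1 zeta1; n2 = surv mu2 zeta2
      in z2 - 1 / (x1 * ga2)
         + \<beta> * ((1 + \<epsilon>) * (z2 - z1) - \<epsilon> / (x1 * ga2)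
                 - ka1 / (ga2 * ip A p1 n1 * x1) * exp (- eta1)
                 + (1 + \<epsilon>) * (ga1 * ip A p2 n2 * x2) / ka2 * exp eta2))"

end

theory Submission
  imports Defs
begin

text \<open>Each hatted quantity in \<open>u_hat\<close> depends on the perturbation only through some
  \<open>\<zeta>\<^sub>i - e\<^sub>i\<close>, and replacing \<open>\<zeta>\<close> by \<open>\<zeta> - e\<close> multiplies the survival factor
  \<open>exp (- \<integral>\<^sub>s\<^sup>t (\<zeta> + \<mu>))\<close> by \<open>exp (e (t - s))\<close> with \<open>0 \<le> t - s \<le> A\<close>. Since all integrands
  are nonnegative, every such quantity \<open>q\<close> satisfies
  \<open>exp (- A \<bar>e\<bar>) q 0 \<le> q e \<le> exp (A \<bar>e\<bar>) q 0\<close>: it is Lipschitz at \<open>0\<close> on bounded sets and,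
  if \<open>q 0 \<noteq> 0\<close>, bounded away from zero there. The coefficients of \<open>1\<close>, \<open>exp (- \<eta>\<^sub>1)\<close> and
  \<open>exp \<eta>\<^sub>2\<close> in \<open>u_hat\<close> are sums, products and quotients of these, hence Lipschitz at
  \<open>e = 0\<close>; and on \<open>\<T>\<^sub>R\<close> the condition \<open>R < min a b\<close> keeps \<open>exp (- \<eta>\<^sub>1)\<close> and
  \<open>exp \<eta>\<^sub>2\<close> below \<open>2\<close>, so the Lipschitz constant is uniform in \<open>\<eta>\<close>.\<close>

definition calm_on :: "('a \<Rightarrow> real) \<Rightarrow> 'a set \<Rightarrow> 'a \<Rightarrow> ('a \<Rightarrow> real) \<Rightarrow> bool" where
  "calm_on \<rho> S x0 f \<longleftrightarrow> (\<exists>C\<ge>0. \<forall>x\<in>S. \<bar>f x - f x0\<bar> \<le> C * \<rho> x)"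

definition bounded_away_from_zero :: "'a set \<Rightarrow> ('a \<Rightarrow> real) \<Rightarrow> bool" where
  "bounded_away_from_zero S f \<longleftrightarrow> (\<exists>m>0. \<forall>x\<in>S. m \<le> \<bar>f x\<bar>)"

lemma calm_onI:
  "C \<ge> 0 \<Longrightarrow> (\<And>x. x \<in> S \<Longrightarrow> \<bar>f x - f x0\<bar> \<le> C * \<rho> x) \<Longrightarrow> calm_on \<rho> S x0 f"
  unfolding calm_on_def by blast

lemma calm_onE:
  assumes "calm_on \<rho> S x0 f"
  obtains C where "C \<ge> 0" "\<And>x. x \<in> S \<Longrightarrow> \<bar>f x - f x0\<bar> \<le> C * \<rho> x"
  using assms unfolding calm_on_def by blast

lemma calm_on_const: "calm_on \<rho> S x0 (\<lambda>x. c)"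
  by (rule calm_onI[of 0]) auto

lemma calm_on_add:
  assumes "calm_on \<rho> S x0 f" "calm_on \<rho> S x0 g"
  shows "calm_on \<rho> S x0 (\<lambda>x. f x + g x)"
proof -
  obtain C D where "C \<ge> 0" "D \<ge> 0"
    and "\<And>x. x \<in> S \<Longrightarrow> \<bar>f x - f x0\<bar> \<le> C * \<rho> x" "\<And>x. x \<in> S \<Longrightarrow> \<bar>g x - g x0\<bar> \<le> D * \<rho> x"
    using assms by (metis calm_onE)
  then show ?thesis
    by (intro calm_onI[of "C + D"]) (fastforce simp: distrib_right abs_le_iff)+
qed

lemma calm_on_minus:
  assumes "calm_on \<rho> S x0 f"
  shows "calm_on \<rho> S x0 (\<lambda>x. - f x)"
  using assms unfolding calm_on_def by (simp add: abs_minus_commute)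

lemma calm_on_diff:
  assumes "calm_on \<rho> S x0 f" "calm_on \<rho> S x0 g"
  shows "calm_on \<rho> S x0 (\<lambda>x. f x - g x)"
  using calm_on_add[OF assms(1) calm_on_minus[OF assms(2)]] by simp

lemma calm_on_mult:
  assumes "calm_on \<rho> S x0 f" "calm_on \<rho> S x0 g" "\<And>x. x \<in> S \<Longrightarrow> \<rho> x \<le> R"
  shows "calm_on \<rho> S x0 (\<lambda>x. f x * g x)"
proof -
  obtain C D where C: "C \<ge> 0" "\<And>x. x \<in> S \<Longrightarrow> \<bar>f x - f x0\<bar> \<le> C * \<rho> x"
    and D: "D \<ge> 0" "\<And>x. x \<in> S \<Longrightarrow> \<bar>g x - g x0\<bar> \<le> D * \<rho> x"
    using assms by (metis calm_onE)
  define B where "B = \<bar>f x0\<bar> + C * \<bar>R\<bar>"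
  show ?thesis
  proof (rule calm_onI[of "B * D + \<bar>g x0\<bar> * C"])
    fix x assume x: "x \<in> S"
    have "C * \<rho> x \<le> C * \<bar>R\<bar>"
      using assms(3) x C(1) by (meson abs_ge_self mult_left_mono order_trans)
    then have fB: "\<bar>f x\<bar> \<le> B"
      unfolding B_def using C(2)[OF x] by linarith
    have "f x * g x - f x0 * g x0 = f x * (g x - g x0) + g x0 * (f x - f x0)"
      by (simp add: algebra_simps)
    then have "\<bar>f x * g x - f x0 * g x0\<bar> \<le> \<bar>f x\<bar> * \<bar>g x - g x0\<bar> + \<bar>g x0\<bar> * \<bar>f x - f x0\<bar>"
      by (metis abs_mult abs_triangle_ineq)
    also have "\<dots> \<le> B * (D * \<rho> x) + \<bar>g x0\<bar> * (C * \<rho> x)"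
      using fB C(2)[OF x] D(2)[OF x] by (intro add_mono mult_mono) auto
    finally show "\<bar>f x * g x - f x0 * g x0\<bar> \<le> (B * D + \<bar>g x0\<bar> * C) * \<rho> x"
      by (simp add: algebra_simps)
  next
    show "0 \<le> B * D + \<bar>g x0\<bar> * C"
      using C(1) D(1) by (simp add: B_def)
  qed
qed

lemma calm_on_inverse:
  assumes "calm_on \<rho> S x0 f" "bounded_away_from_zero S f" "x0 \<in> S"
  shows "calm_on \<rho> S x0 (\<lambda>x. inverse (f x))"
proof -
  obtain C where C: "C \<ge> 0" "\<And>x. x \<in> S \<Longrightarrow> \<bar>f x - f x0\<bar> \<le> C * \<rho> x"
    using assms(1) by (metis calm_onE)
  obtain m where m: "m > 0" "\<And>x. x \<in> S \<Longrightarrow> m \<le> \<bar>f x\<bar>"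
    using assms(2) unfolding bounded_away_from_zero_def by blast
  show ?thesis
  proof (rule calm_onI[of "C / (m * m)"])
    fix x assume x: "x \<in> S"
    have "f x \<noteq> 0" "f x0 \<noteq> 0"
      using m x assms(3) by (metis abs_zero not_less)+
    then have "\<bar>inverse (f x) - inverse (f x0)\<bar> = \<bar>f x - f x0\<bar> / (\<bar>f x\<bar> * \<bar>f x0\<bar>)"
      by (simp add: inverse_diff_inverse abs_mult abs_minus_commute divide_inverse mult_ac)
    also have "\<dots> \<le> (C * \<rho> x) / (m * m)"
      using C(2)[OF x] m x assms(3) by (intro frac_le mult_mono) auto
    finally show "\<bar>inverse (f x) - inverse (f x0)\<bar> \<le> C / (m * m) * \<rho> x"
      by simp
  qed (use C m in simp)
qed

lemma calm_on_divide:
  assumes "calm_on \<rho> S x0 f" "calm_on \<rho> S x0 g" "bounded_away_from_zero S g" "x0 \<in> S"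
    and "\<And>x. x \<in> S \<Longrightarrow> \<rho> x \<le> R"
  shows "calm_on \<rho> S x0 (\<lambda>x. f x / g x)"
  using calm_on_mult[OF assms(1) calm_on_inverse[OF assms(2-4)] assms(5)]
  by (simp add: divide_inverse)

lemma calm_on_compose:
  assumes "calm_on \<sigma> T y0 q" "\<And>x. x \<in> S \<Longrightarrow> h x \<in> T"
    and "\<And>x. x \<in> S \<Longrightarrow> \<sigma> (h x) \<le> \<rho> x" "h x0 = y0"
  shows "calm_on \<rho> S x0 (\<lambda>x. q (h x))"
proof -
  obtain C where C: "C \<ge> 0" "\<And>y. y \<in> T \<Longrightarrow> \<bar>q y - q y0\<bar> \<le> C * \<sigma> y"
    using assms(1) by (metis calm_onE)
  show ?thesis
  proof (rule calm_onI[OF C(1)])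
    fix x assume x: "x \<in> S"
    have "\<bar>q (h x) - q y0\<bar> \<le> C * \<sigma> (h x)"
      using C(2) assms(2) x by blast
    also have "\<dots> \<le> C * \<rho> x"
      by (rule mult_left_mono[OF assms(3)[OF x] C(1)])
    finally show "\<bar>q (h x) - q (h x0)\<bar> \<le> C * \<rho> x"
      using assms(4) by simp
  qed
qed

lemma bounded_away_from_zero_const: "c \<noteq> 0 \<Longrightarrow> bounded_away_from_zero S (\<lambda>x. c)"
  unfolding bounded_away_from_zero_def by (intro exI[of _ "\<bar>c\<bar>"]) auto

lemma bounded_away_from_zero_mult:
  assumes "bounded_away_from_zero S f" "bounded_away_from_zero S g"
  shows "bounded_away_from_zero S (\<lambda>x. f x * g x)"
proof -
  obtain m n where "m > 0" "\<And>x. x \<in> S \<Longrightarrow> m \<le> \<bar>f x\<bar>" "n > 0" "\<And>x. x \<in> S \<Longrightarrow> n \<le> \<bar>g x\<bar>"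
    using assms unfolding bounded_away_from_zero_def by blast
  then show ?thesis
    unfolding bounded_away_from_zero_def
    by (intro exI[of _ "m * n"]) (auto simp: abs_mult intro!: mult_mono)
qed

lemma bounded_away_from_zero_compose:
  assumes "bounded_away_from_zero T q" "\<And>x. x \<in> S \<Longrightarrow> h x \<in> T"
  shows "bounded_away_from_zero S (\<lambda>x. q (h x))"
  using assms unfolding bounded_away_from_zero_def by blast

lemma calm_on_linear_combination_uniform:
  assumes "calm_on \<rho> S x0 f" "calm_on \<rho> S x0 g" "calm_on \<rho> S x0 h" "\<forall>x\<in>S. 0 \<le> \<rho> x"
  shows "\<exists>C>0. \<forall>x\<in>S. \<forall>s t. \<bar>s\<bar> \<le> T \<and> \<bar>t\<bar> \<le> T \<longrightarrow>
           \<bar>(f x + s * g x + t * h x) - (f x0 + s * g x0 + t * h x0)\<bar> \<le> C * \<rho> x"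
proof -
  obtain Cf Cg Ch where Cf: "Cf \<ge> 0" "\<And>x. x \<in> S \<Longrightarrow> \<bar>f x - f x0\<bar> \<le> Cf * \<rho> x"
    and Cg: "Cg \<ge> 0" "\<And>x. x \<in> S \<Longrightarrow> \<bar>g x - g x0\<bar> \<le> Cg * \<rho> x"
    and Ch: "Ch \<ge> 0" "\<And>x. x \<in> S \<Longrightarrow> \<bar>h x - h x0\<bar> \<le> Ch * \<rho> x"
    using assms(1-3) by (metis calm_onE)
  define C where "C = Cf + \<bar>T\<bar> * (Cg + Ch) + 1"
  have "\<bar>(f x + s * g x + t * h x) - (f x0 + s * g x0 + t * h x0)\<bar> \<le> C * \<rho> x"
    if x: "x \<in> S" and st: "\<bar>s\<bar> \<le> T" "\<bar>t\<bar> \<le> T" for x s t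
  proof -
    have "(f x + s * g x + t * h x) - (f x0 + s * g x0 + t * h x0)
          = (f x - f x0) + s * (g x - g x0) + t * (h x - h x0)"
      by (simp add: algebra_simps)
    then have "\<bar>(f x + s * g x + t * h x) - (f x0 + s * g x0 + t * h x0)\<bar>
               \<le> \<bar>f x - f x0\<bar> + \<bar>s\<bar> * \<bar>g x - g x0\<bar> + \<bar>t\<bar> * \<bar>h x - h x0\<bar>"
      by (simp add: abs_mult[symmetric] abs_triangle_ineq order_trans[OF abs_triangle_ineq add_right_mono])
    also have "\<dots> \<le> Cf * \<rho> x + \<bar>T\<bar> * (Cg * \<rho> x) + \<bar>T\<bar> * (Ch * \<rho> x)"
      using Cf Cg Ch x st by (intro add_mono mult_mono) auto
    also have "\<dots> \<le> C * \<rho> x"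
      using assms(4) x by (simp add: C_def algebra_simps)
    finally show ?thesis .
  qed
  moreover have "C > 0"
    using Cf Cg Ch by (simp add: C_def add_nonneg_pos)
  ultimately show ?thesis by blast
qed

text \<open>The ratio \<open>q e / q 0\<close> lies between \<open>exp (- L \<bar>e\<bar>)\<close> and \<open>exp (L \<bar>e\<bar>)\<close>; stated
  multiplicatively so that \<open>q 0 = 0\<close> is not excluded.\<close>
definition ratio_bounded :: "real \<Rightarrow> (real \<Rightarrow> real) \<Rightarrow> bool" where
  "ratio_bounded L q \<longleftrightarrow>
     (\<forall>e. exp (- (\<bar>e\<bar> * L)) * q 0 \<le> q e \<and> q e \<le> exp (\<bar>e\<bar> * L) * q 0)"

lemma ratio_bounded_exp:
  assumes "0 \<le> c" "\<bar>w\<bar> \<le> L"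
  shows "ratio_bounded L (\<lambda>e. c * exp (e * w))"
  unfolding ratio_bounded_def
proof (intro allI conjI)
  fix e :: real
  have "\<bar>e * w\<bar> \<le> \<bar>e\<bar> * L"
    using assms(2) by (simp add: abs_mult mult_left_mono)
  then have "exp (- (\<bar>e\<bar> * L)) \<le> exp (e * w)" "exp (e * w) \<le> exp (\<bar>e\<bar> * L)"
    by (simp_all add: abs_le_iff)
  then show "exp (- (\<bar>e\<bar> * L)) * (c * exp (0 * w)) \<le> c * exp (e * w)"
    and "c * exp (e * w) \<le> exp (\<bar>e\<bar> * L) * (c * exp (0 * w))"
    using assms(1) by (simp_all add: mult_left_mono mult.commute)
qed

lemma ratio_bounded_mult_left:
  assumes "ratio_bounded L q" "0 \<le> c"
  shows "ratio_bounded L (\<lambda>e. c * q e)"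
  using assms unfolding ratio_bounded_def by (auto simp: mult.left_commute intro!: mult_left_mono)

lemma ratio_bounded_mult_right:
  assumes "ratio_bounded L q" "0 \<le> c"
  shows "ratio_bounded L (\<lambda>e. q e * c)"
  using ratio_bounded_mult_left[OF assms] by (simp add: mult.commute)

lemma ratio_bounded_integral:
  fixes f :: "real \<Rightarrow> 'n::euclidean_space \<Rightarrow> real"
  assumes "\<And>e. f e integrable_on S" "\<And>s. s \<in> S \<Longrightarrow> ratio_bounded L (\<lambda>e. f e s)"
  shows "ratio_bounded L (\<lambda>e. integral S (f e))"
  unfolding ratio_bounded_def
proof (intro allI conjI)
  fix e :: real
  have "integral S (\<lambda>s. exp (- (\<bar>e\<bar> * L)) * f 0 s) \<le> integral S (f e)"
    using assms unfolding ratio_bounded_def by (intro integral_le integrable_on_cmult_left) auto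
  then show "exp (- (\<bar>e\<bar> * L)) * integral S (f 0) \<le> integral S (f e)"
    by simp
  have "integral S (f e) \<le> integral S (\<lambda>s. exp (\<bar>e\<bar> * L) * f 0 s)"
    using assms unfolding ratio_bounded_def by (intro integral_le integrable_on_cmult_left) auto
  then show "integral S (f e) \<le> exp (\<bar>e\<bar> * L) * integral S (f 0)"
    by simp
qed

lemma ratio_bounded_nonneg:
  assumes "ratio_bounded L q" "0 < L"
  shows "0 \<le> q 0"
proof -
  have "exp (- L) * q 0 \<le> q 1" "q 1 \<le> exp L * q 0"
    using assms(1) unfolding ratio_bounded_def by (metis abs_one mult_1)+
  then have "0 \<le> (exp L - exp (- L)) * q 0"
    by (simp add: left_diff_distrib)
  moreover have "exp (- L) < exp L"
    using assms(2) by simp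
  ultimately show ?thesis
    by (simp add: zero_le_mult_iff)
qed

lemma exp_minus_one_le: "exp x - 1 \<le> x * exp (x::real)"
proof -
  have "(1 - x) * exp x \<le> exp (- x) * exp x"
    using exp_ge_add_one_self[of "- x"] by (intro mult_right_mono) auto
  then show ?thesis
    by (simp add: exp_minus field_simps)
qed

lemma ratio_bounded_calm_on:
  assumes "ratio_bounded L q" "0 < L"
  shows "calm_on abs {-\<delta>..\<delta>} 0 q"
proof (rule calm_onI)
  have q0: "0 \<le> q 0"
    using assms by (rule ratio_bounded_nonneg)
  then show "0 \<le> L * exp (\<delta> * L) * q 0"
    using assms(2) by simp
  fix e assume "e \<in> {-\<delta>..\<delta>}"
  then have c: "0 \<le> \<bar>e\<bar> * L" "\<bar>e\<bar> * L \<le> \<delta> * L"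
    using assms(2) by (auto intro: mult_right_mono)
  have "q e - q 0 \<le> (exp (\<bar>e\<bar> * L) - 1) * q 0"
    using assms(1) unfolding ratio_bounded_def by (simp add: algebra_simps)
  also have "\<dots> \<le> (\<bar>e\<bar> * L * exp (\<bar>e\<bar> * L)) * q 0"
    using q0 by (intro mult_right_mono exp_minus_one_le)
  also have "\<dots> \<le> (\<bar>e\<bar> * L * exp (\<delta> * L)) * q 0"
    using q0 c by (intro mult_right_mono mult_left_mono) auto
  finally have upper: "q e - q 0 \<le> \<bar>e\<bar> * L * exp (\<delta> * L) * q 0" .
  have "q 0 - q e \<le> (1 - exp (- (\<bar>e\<bar> * L))) * q 0"
    using assms(1) unfolding ratio_bounded_def by (simp add: algebra_simps)
  also have "\<dots> \<le> (\<bar>e\<bar> * L) * q 0"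
    using q0 exp_ge_add_one_self[of "- (\<bar>e\<bar> * L)"] by (intro mult_right_mono) auto
  also have "\<dots> \<le> (\<bar>e\<bar> * L * exp (\<delta> * L)) * q 0"
    using q0 c mult_left_mono[of 1 "exp (\<delta> * L)" "\<bar>e\<bar> * L"] by (intro mult_right_mono) auto
  finally have lower: "q 0 - q e \<le> \<bar>e\<bar> * L * exp (\<delta> * L) * q 0" .
  from upper lower show "\<bar>q e - q 0\<bar> \<le> L * exp (\<delta> * L) * q 0 * \<bar>e\<bar>"
    by (simp add: abs_le_iff mult_ac)
qed

lemma ratio_bounded_away_from_zero:
  assumes "ratio_bounded L q" "0 < L" "q 0 \<noteq> 0"
  shows "bounded_away_from_zero {-\<delta>..\<delta>} q"
  unfolding bounded_away_from_zero_def
proof (intro exI conjI ballI)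
  have q0: "0 < q 0"
    using ratio_bounded_nonneg[OF assms(1,2)] assms(3) by simp
  then show "0 < exp (- (\<delta> * L)) * q 0"
    by simp
  fix e assume "e \<in> {-\<delta>..\<delta>}"
  then have "exp (- (\<delta> * L)) \<le> exp (- (\<bar>e\<bar> * L))"
    using assms(2) by (auto intro: mult_right_mono)
  then have "exp (- (\<delta> * L)) * q 0 \<le> exp (- (\<bar>e\<bar> * L)) * q 0"
    using q0 by (simp add: mult_right_mono)
  also have "\<dots> \<le> q e"
    using assms(1) unfolding ratio_bounded_def by blast
  finally show "exp (- (\<delta> * L)) * q 0 \<le> \<bar>q e\<bar>"
    by simp
qed

lemma exp_neg_integral_shift:
  fixes mu :: "real \<Rightarrow> real"
  assumes "continuous_on {lo..hi} mu" "lo \<le> hi"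
  shows "exp (- integral {lo..hi} (\<lambda>s. (z - e) + mu s))
         = exp (- integral {lo..hi} (\<lambda>s. z + mu s)) * exp (e * (hi - lo))"
proof -
  have "(\<lambda>s. z + mu s) integrable_on {lo..hi}"
    by (intro integrable_continuous_interval continuous_intros assms(1))
  then have "integral {lo..hi} (\<lambda>s. (z + mu s) - e) = integral {lo..hi} (\<lambda>s. z + mu s) - e * (hi - lo)"
    using assms(2) by (subst integral_diff) (auto simp: mult.commute)
  then show ?thesis
    by (simp add: algebra_simps flip: exp_add)
qed

lemma ratio_bounded_exp_neg_integral:
  fixes mu :: "real \<Rightarrow> real"
  assumes "continuous_on {lo..hi} mu" "lo \<le> hi" "hi - lo \<le> L"
  shows "ratio_bounded L (\<lambda>e. exp (- integral {lo..hi} (\<lambda>s. (z - e) + mu s)))"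
  unfolding exp_neg_integral_shift[OF assms(1,2)]
  using assms(2,3) by (intro ratio_bounded_exp) auto

lemma surv_pos: "0 < surv mu z a"
  by (simp add: surv_def)

lemma continuous_on_surv:
  assumes "continuous_on {0..A} mu"
  shows "continuous_on {0..A} (surv mu z)"
  unfolding surv_def
  by (intro continuous_intros indefinite_integral_continuous_1 integrable_continuous_interval assms)

lemma continuous_on_G_pi:
  assumes "continuous_on {0..A} k" "continuous_on {0..A} mu"
  shows "continuous_on {0..A} (G_pi A k mu z)"
proof -
  define M where "M x = integral {0..x} (\<lambda>l. z + mu l)" for x
  have int: "(\<lambda>l. z + mu l) integrable_on {0..A}"
    by (intro integrable_continuous_interval continuous_intros assms(2))
  have M: "continuous_on {0..A} M"
    unfolding M_def by (rule indefinite_integral_continuous_1[OF int])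
  define h where "h s = k s * exp (- M s)" for s
  have h: "h integrable_on {0..A}"
    unfolding h_def by (intro integrable_continuous_interval continuous_intros M assms(1))
  have G_pi_eq: "G_pi A k mu z a = exp (M a) * integral {a..A} h" if a: "a \<in> {0..A}" for a
  proof -
    have combine: "integral {a..s} (\<lambda>l. z + mu l) = M s - M a" if s: "s \<in> {a..A}" for s
    proof -
      have "(\<lambda>l. z + mu l) integrable_on {0..s}"
        using s by (intro integrable_on_subinterval[OF int]) auto
      then have "integral {0..a} (\<lambda>l. z + mu l) + integral {a..s} (\<lambda>l. z + mu l) = M s"
        unfolding M_def using a s by (intro Henstock_Kurzweil_Integration.integral_combine) auto
      then show ?thesis
        unfolding M_def by linarith
    qed
    have "G_pi A k mu z a = integral {a..A} (\<lambda>s. exp (M a) * h s)"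
      unfolding G_pi_def h_def
      by (intro integral_cong) (simp add: combine exp_diff exp_minus field_simps)
    then show ?thesis
      by simp
  qed
  have "continuous_on {0..A} (\<lambda>a. exp (M a) * integral {a..A} h)"
    by (intro continuous_intros M indefinite_integral_continuous_1' h)
  then show ?thesis
    by (rule continuous_on_eq) (simp add: G_pi_eq)
qed

lemma ratio_bounded_surv:
  fixes mu :: "real \<Rightarrow> real"
  assumes "continuous_on {0..A} mu" "a \<in> {0..A}"
  shows "ratio_bounded A (\<lambda>e. surv mu (z - e) a)"
  unfolding surv_def
  using assms by (intro ratio_bounded_exp_neg_integral) (auto intro: continuous_on_subset)

lemma ratio_bounded_G_gamma:
  assumes "continuous_on {0..A} g" "continuous_on {0..A} mu" "\<And>a. a \<in> {0..A} \<Longrightarrow> 0 \<le> g a"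
  shows "ratio_bounded A (\<lambda>e. G_gamma A g (z - e) mu)"
  unfolding G_gamma_def
  using assms by (intro ratio_bounded_integral ratio_bounded_mult_left ratio_bounded_surv
      integrable_continuous_interval continuous_intros continuous_on_surv) auto

lemma ratio_bounded_G_kappa:
  assumes "continuous_on {0..A} k" "continuous_on {0..A} mu" "\<And>a. a \<in> {0..A} \<Longrightarrow> 0 \<le> k a"
  shows "ratio_bounded A (\<lambda>e. G_kappa A k mu (z - e))"
  unfolding G_kappa_def
  using assms by (intro ratio_bounded_integral ratio_bounded_mult_left ratio_bounded_surv
      integrable_continuous_interval continuous_intros continuous_on_surv) auto

lemma ratio_bounded_G_pi:
  fixes mu :: "real \<Rightarrow> real"
  assumes k: "continuous_on {0..A} k" and mu: "continuous_on {0..A} mu"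
    and k_nonneg: "\<And>s. s \<in> {0..A} \<Longrightarrow> 0 \<le> k s" and a: "a \<in> {0..A}"
  shows "ratio_bounded A (\<lambda>e. G_pi A k mu (z - e) a)"
  unfolding G_pi_def
proof (rule ratio_bounded_integral)
  have sub: "{a..A} \<subseteq> {0..A}"
    using a by auto
  fix e
  show "(\<lambda>s. k s * exp (- integral {a..s} (\<lambda>l. (z - e) + mu l))) integrable_on {a..A}"
    by (intro integrable_continuous_interval continuous_intros continuous_on_subset[OF k sub]
        continuous_on_subset[OF mu sub] indefinite_integral_continuous_1)
next
  fix s assume s: "s \<in> {a..A}"
  then show "ratio_bounded A (\<lambda>e. k s * exp (- integral {a..s} (\<lambda>l. (z - e) + mu l)))"
    using a k_nonneg[of s]
    by (intro ratio_bounded_mult_left ratio_bounded_exp_neg_integral continuous_on_subset[OF mu]) auto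
qed

lemma ratio_bounded_ip_G_pi:
  fixes mu :: "real \<Rightarrow> real"
  assumes "continuous_on {0..A} k" "continuous_on {0..A} mu" "continuous_on {0..A} n"
    and "\<And>s. s \<in> {0..A} \<Longrightarrow> 0 \<le> k s" "\<And>s. s \<in> {0..A} \<Longrightarrow> 0 \<le> n s"
  shows "ratio_bounded A (\<lambda>e. ip A (G_pi A k mu (z - e)) n)"
  unfolding ip_def
  using assms by (intro ratio_bounded_integral ratio_bounded_mult_right ratio_bounded_G_pi
      integrable_continuous_interval continuous_intros continuous_on_G_pi) auto

lemma integral_pos_if_pos_at:
  fixes f :: "real \<Rightarrow> real"
  assumes "continuous_on {a..b} f" "a < b" "\<And>x. x \<in> {a..b} \<Longrightarrow> 0 \<le> f x"
    and "x \<in> {a..b}" "0 < f x"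
  shows "0 < integral {a..b} f"
proof -
  have "0 \<le> integral {a..b} f"
    using assms(1,3) by (intro integral_nonneg integrable_continuous_interval)
  moreover have "integral {a..b} f \<noteq> 0"
    using integral_eq_0_iff[OF assms(1-3)] assms(4,5) by force
  ultimately show ?thesis
    by simp
qed

lemma integral_mult_id_pos:
  fixes f :: "real \<Rightarrow> real"
  assumes "continuous_on {0..A} f" "\<And>x. x \<in> {0..A} \<Longrightarrow> 0 \<le> f x" "0 < integral {0..A} f"
  shows "0 < integral {0..A} (\<lambda>a. a * f a)"
proof -
  have "\<exists>x\<in>{0<..A}. f x \<noteq> 0"
  proof (rule ccontr)
    assume "\<not> ?thesis"
    then have "integral {0..A} f = integral {0..A} (\<lambda>_. 0)"
      by (intro integral_spike[of "{0}"]) auto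
    with assms(3) show False
      by simp
  qed
  then obtain x where x: "x \<in> {0<..A}" "0 < f x"
    using assms(2) by (force simp: less_le)
  show ?thesis
    using x assms(2)
    by (intro integral_pos_if_pos_at[of 0 A _ x] continuous_intros assms(1)) auto
qed

lemma G_pi_at_0: "G_pi A k mu z 0 = integral {0..A} (\<lambda>s. k s * surv mu z s)"
  by (simp add: G_pi_def surv_def)

lemma ip_G_pi_pos:
  fixes mu :: "real \<Rightarrow> real"
  assumes "0 < A" "continuous_on {0..A} k" "continuous_on {0..A} mu"
    and "\<And>s. s \<in> {0..A} \<Longrightarrow> 0 \<le> k s" and "0 < integral {0..A} (\<lambda>s. k s * surv mu z s)"
  shows "0 < ip A (G_pi A k mu z) (surv mu z)"
  unfolding ip_def
proof (rule integral_pos_if_pos_at[of 0 A _ 0])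
  have "0 \<le> G_pi A k mu z a" if "a \<in> {0..A}" for a
    using ratio_bounded_nonneg[OF ratio_bounded_G_pi[OF assms(2-4) that, of z] assms(1)] by simp
  then show "\<And>a. a \<in> {0..A} \<Longrightarrow> 0 \<le> G_pi A k mu z a * surv mu z a"
    by (simp add: surv_def)
  show "0 < G_pi A k mu z 0 * surv mu z 0"
    using assms(5) by (simp add: G_pi_at_0 surv_def)
qed (use assms in \<open>auto intro!: continuous_intros continuous_on_G_pi continuous_on_surv\<close>)

lemma G_kappa_pos:
  fixes mu :: "real \<Rightarrow> real"
  assumes "continuous_on {0..A} k" "continuous_on {0..A} mu"
    and "\<And>s. s \<in> {0..A} \<Longrightarrow> 0 \<le> k s" and "0 < integral {0..A} (\<lambda>s. k s * surv mu z s)"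
  shows "0 < G_kappa A k mu z"
  using integral_mult_id_pos[of A "\<lambda>s. k s * surv mu z s"] assms
  by (simp add: G_kappa_def surv_def mult.assoc continuous_intros continuous_on_surv[unfolded surv_def])

definition l1_norm :: "real \<times> real \<Rightarrow> real" where
  "l1_norm e = \<bar>fst e\<bar> + \<bar>snd e\<bar>"

lemma
  assumes "ratio_bounded L q" "0 < L"
  shows ratio_bounded_calm_on_fst: "calm_on l1_norm {e. l1_norm e \<le> \<delta>} 0 (\<lambda>e. q (fst e))"
    and ratio_bounded_calm_on_snd: "calm_on l1_norm {e. l1_norm e \<le> \<delta>} 0 (\<lambda>e. q (snd e))"
  by (auto intro!: calm_on_compose[OF ratio_bounded_calm_on[OF assms, of \<delta>]] simp: l1_norm_def)

lemma
  assumes "ratio_bounded L q" "0 < L" "q 0 \<noteq> 0"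
  shows ratio_bounded_away_from_zero_fst:
      "bounded_away_from_zero {e. l1_norm e \<le> \<delta>} (\<lambda>e. q (fst e))"
    and ratio_bounded_away_from_zero_snd:
      "bounded_away_from_zero {e. l1_norm e \<le> \<delta>} (\<lambda>e. q (snd e))"
  by (auto intro!: bounded_away_from_zero_compose[OF ratio_bounded_away_from_zero[OF assms, of \<delta>]]
      simp: l1_norm_def)

lemma calm_on_l1_norm_fst_snd:
  "calm_on l1_norm S 0 fst" "calm_on l1_norm S 0 snd"
  by (auto intro!: calm_onI[of 1] simp: l1_norm_def)

lemma abs_less_one_if_sqrt_sum_squares_le:
  fixes a b p q R :: real
  assumes "sqrt ((a * p)\<^sup>2 + (b * q)\<^sup>2) \<le> R" "R < a" "R < b"
  shows "\<bar>p\<bar> < 1" "\<bar>q\<bar> < 1"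
proof -
  have "\<bar>a * p\<bar> \<le> sqrt ((a * p)\<^sup>2 + (b * q)\<^sup>2)" "\<bar>b * q\<bar> \<le> sqrt ((a * p)\<^sup>2 + (b * q)\<^sup>2)"
    using real_sqrt_sum_squares_ge1[of "\<bar>a * p\<bar>" "b * q"]
      real_sqrt_sum_squares_ge2[of "\<bar>b * q\<bar>" "a * p"] by (simp_all only: power2_abs)
  then have ap: "\<bar>a * p\<bar> < a" and bq: "\<bar>b * q\<bar> < b"
    using assms by linarith+
  moreover have "0 < a" "0 < b"
    using ap bq abs_ge_zero[of "a * p"] abs_ge_zero[of "b * q"] by linarith+
  ultimately show "\<bar>p\<bar> < 1" "\<bar>q\<bar> < 1"
    by (simp_all add: abs_mult)
qed

locale u_hat_data =
  fixes A :: real and k1 mu1 g1 k2 mu2 g2 :: "real \<Rightarrow> real" and zeta1 zeta2 x1 x2 \<epsilon> \<beta> :: real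
  assumes A_pos: "0 < A"
    and cont: "continuous_on {0..A} k1" "continuous_on {0..A} mu1" "continuous_on {0..A} g1"
      "continuous_on {0..A} k2" "continuous_on {0..A} mu2" "continuous_on {0..A} g2"
    and nonneg: "\<And>t. t \<in> {0..A} \<Longrightarrow> 0 \<le> k1 t \<and> 0 \<le> g1 t \<and> 0 \<le> k2 t \<and> 0 \<le> g2 t"
begin

definition "gamma1_hat e = G_gamma A g1 (zeta2 - e) mu2"
definition "gamma2_hat e = G_gamma A g2 (zeta1 - e) mu1"
definition "kappa1_hat e = G_kappa A k1 mu1 (zeta1 - e)"
definition "kappa2_hat e = G_kappa A k2 mu2 (zeta2 - e)"
definition "pairing1_hat e = ip A (G_pi A k1 mu1 (zeta1 - e)) (surv mu1 zeta1)"
definition "pairing2_hat e = ip A (G_pi A k2 mu2 (zeta2 - e)) (surv mu2 zeta2)"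

lemma ratio_bounded_hats:
  "ratio_bounded A gamma1_hat" "ratio_bounded A gamma2_hat"
  "ratio_bounded A kappa1_hat" "ratio_bounded A kappa2_hat"
  "ratio_bounded A pairing1_hat" "ratio_bounded A pairing2_hat"
  unfolding gamma1_hat_def gamma2_hat_def kappa1_hat_def kappa2_hat_def pairing1_hat_def
    pairing2_hat_def
  using cont nonneg
  by (auto intro!: ratio_bounded_G_gamma ratio_bounded_G_kappa ratio_bounded_ip_G_pi
      continuous_on_surv less_imp_le[OF surv_pos])

definition u0 :: "real \<times> real \<Rightarrow> real" where
  "u0 e = (zeta2 - snd e) - 1 / (x1 * gamma2_hat (fst e))
     + \<beta> * ((1 + \<epsilon>) * ((zeta2 - snd e) - (zeta1 - fst e)) - \<epsilon> / (x1 * gamma2_hat (fst e)))"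

definition u1 :: "real \<times> real \<Rightarrow> real" where
  "u1 e = kappa1_hat (fst e) / (gamma2_hat (fst e) * pairing1_hat (fst e) * x1)"

definition u2 :: "real \<times> real \<Rightarrow> real" where
  "u2 e = (1 + \<epsilon>) * (gamma1_hat (snd e) * pairing2_hat (snd e) * x2) / kappa2_hat (snd e)"

lemma u_hat_eq:
  "u_hat A k1 mu1 g1 k2 mu2 g2 zeta1 zeta2 x1 x2 \<epsilon> \<beta> eta1 eta2 e1 e2
     = u0 (e1, e2) + (\<beta> * exp eta2) * u2 (e1, e2) + (- \<beta> * exp (- eta1)) * u1 (e1, e2)"
  by (simp add: u_hat_def Let_def u0_def u1_def u2_def gamma1_hat_def gamma2_hat_def kappa1_hat_def
      kappa2_hat_def pairing1_hat_def pairing2_hat_def algebra_simps)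

lemma calm_on_u_hat_coefficients:
  assumes "0 \<le> \<delta>" "x1 * gamma2_hat 0 \<noteq> 0" "kappa2_hat 0 \<noteq> 0" "pairing1_hat 0 \<noteq> 0"
  defines "S \<equiv> {e. l1_norm e \<le> \<delta>}"
  shows "calm_on l1_norm S 0 u0" "calm_on l1_norm S 0 u1" "calm_on l1_norm S 0 u2"
proof -
  have S: "\<And>e. e \<in> S \<Longrightarrow> l1_norm e \<le> \<delta>" "0 \<in> S"
    using assms(1) by (auto simp: S_def l1_norm_def)
  note rb = ratio_bounded_hats
  have "x1 \<noteq> 0" "gamma2_hat 0 \<noteq> 0"
    using assms(2) by simp_all
  then have away: "bounded_away_from_zero S (\<lambda>e. x1 * gamma2_hat (fst e))"
    "bounded_away_from_zero S (\<lambda>e. gamma2_hat (fst e) * pairing1_hat (fst e) * x1)"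
    "bounded_away_from_zero S (\<lambda>e. kappa2_hat (snd e))"
    unfolding S_def using assms(3,4) A_pos
    by (auto intro!: bounded_away_from_zero_mult bounded_away_from_zero_const
        ratio_bounded_away_from_zero_fst[OF rb(2)] ratio_bounded_away_from_zero_fst[OF rb(5)]
        ratio_bounded_away_from_zero_snd[OF rb(4)])
  note calm_intros = calm_on_add calm_on_diff calm_on_mult[where R = \<delta>]
    calm_on_divide[where R = \<delta>] calm_on_const calm_on_l1_norm_fst_snd away S
    ratio_bounded_calm_on_fst[OF rb(2) A_pos, of \<delta>, folded S_def]
    ratio_bounded_calm_on_fst[OF rb(3) A_pos, of \<delta>, folded S_def]
    ratio_bounded_calm_on_fst[OF rb(5) A_pos, of \<delta>, folded S_def]
    ratio_bounded_calm_on_snd[OF rb(1) A_pos, of \<delta>, folded S_def]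
    ratio_bounded_calm_on_snd[OF rb(4) A_pos, of \<delta>, folded S_def]
    ratio_bounded_calm_on_snd[OF rb(6) A_pos, of \<delta>, folded S_def]
  show "calm_on l1_norm S 0 u0"
    unfolding u0_def by (intro calm_intros)
  show "calm_on l1_norm S 0 u1"
    unfolding u1_def by (intro calm_intros)
  show "calm_on l1_norm S 0 u2"
    unfolding u2_def by (intro calm_intros)
qed

lemma u_hat_calm_uniform:
  assumes "0 \<le> \<delta>" "x1 * gamma2_hat 0 \<noteq> 0" "kappa2_hat 0 \<noteq> 0" "pairing1_hat 0 \<noteq> 0"
  shows "\<exists>C>0. \<forall>eta1 eta2 e1 e2. exp (- eta1) \<le> T \<and> exp eta2 \<le> T \<and> \<bar>e1\<bar> + \<bar>e2\<bar> \<le> \<delta> \<longrightarrow>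
           \<bar>u_hat A k1 mu1 g1 k2 mu2 g2 zeta1 zeta2 x1 x2 \<epsilon> \<beta> eta1 eta2 e1 e2
            - u_hat A k1 mu1 g1 k2 mu2 g2 zeta1 zeta2 x1 x2 \<epsilon> \<beta> eta1 eta2 0 0\<bar>
           \<le> C * (\<bar>e1\<bar> + \<bar>e2\<bar>)"
proof -
  have "\<forall>e\<in>{e. l1_norm e \<le> \<delta>}. 0 \<le> l1_norm e"
    by (simp add: l1_norm_def)
  from calm_on_linear_combination_uniform[OF calm_on_u_hat_coefficients(1,3,2)[OF assms] this]
  obtain C where C: "C > 0" "\<forall>e. l1_norm e \<le> \<delta> \<longrightarrow> (\<forall>s t. \<bar>s\<bar> \<le> \<bar>\<beta>\<bar> * T \<and> \<bar>t\<bar> \<le> \<bar>\<beta>\<bar> * T \<longrightarrow>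
      \<bar>(u0 e + s * u2 e + t * u1 e) - (u0 0 + s * u2 0 + t * u1 0)\<bar> \<le> C * l1_norm e)"
    by blast
  show ?thesis
  proof (intro exI[of _ C] conjI allI impI)
    fix eta1 eta2 e1 e2 :: real
    assume h: "exp (- eta1) \<le> T \<and> exp eta2 \<le> T \<and> \<bar>e1\<bar> + \<bar>e2\<bar> \<le> \<delta>"
    then have "\<bar>\<beta> * exp eta2\<bar> \<le> \<bar>\<beta>\<bar> * T" "\<bar>- \<beta> * exp (- eta1)\<bar> \<le> \<bar>\<beta>\<bar> * T"
        "l1_norm (e1, e2) \<le> \<delta>"
      by (auto simp: abs_mult l1_norm_def intro: mult_left_mono)
    with C(2)[rule_format, of "(e1, e2)" "\<beta> * exp eta2" "- \<beta> * exp (- eta1)"]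
    show "\<bar>u_hat A k1 mu1 g1 k2 mu2 g2 zeta1 zeta2 x1 x2 \<epsilon> \<beta> eta1 eta2 e1 e2
            - u_hat A k1 mu1 g1 k2 mu2 g2 zeta1 zeta2 x1 x2 \<epsilon> \<beta> eta1 eta2 0 0\<bar>
           \<le> C * (\<bar>e1\<bar> + \<bar>e2\<bar>)"
      unfolding u_hat_eq by (simp add: l1_norm_def zero_prod_def)
  qed (rule C(1))
qed

lemma u_hat_lipschitz_on_T_R:
  assumes "0 \<le> \<delta>" "kappa2_hat 0 \<noteq> 0" "pairing1_hat 0 \<noteq> 0"
  shows "\<forall>R. 0 < R \<and> R < min (1 / (x1 * gamma2_hat 0)) (zeta1 - zeta2 + 1 / (x1 * gamma2_hat 0)) \<longrightarrow>
    (\<exists>C>0. \<forall>eta1 eta2 e1 e2.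
       sqrt ((1 / (x1 * gamma2_hat 0) * (1 - exp (- eta1)))\<^sup>2
         + ((zeta1 - zeta2 + 1 / (x1 * gamma2_hat 0)) * (exp eta2 - 1))\<^sup>2) \<le> R
       \<and> \<bar>e1\<bar> + \<bar>e2\<bar> \<le> \<delta> \<longrightarrow>
       \<bar>u_hat A k1 mu1 g1 k2 mu2 g2 zeta1 zeta2 x1 x2 \<epsilon> \<beta> eta1 eta2 e1 e2
         - u_hat A k1 mu1 g1 k2 mu2 g2 zeta1 zeta2 x1 x2 \<epsilon> \<beta> eta1 eta2 0 0\<bar>
       \<le> C * (\<bar>e1\<bar> + \<bar>e2\<bar>))"
proof (intro allI impI)
  fix R
  assume R: "0 < R \<and> R < min (1 / (x1 * gamma2_hat 0)) (zeta1 - zeta2 + 1 / (x1 * gamma2_hat 0))"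
  then have "x1 * gamma2_hat 0 \<noteq> 0"
    by auto
  with u_hat_calm_uniform[OF assms(1) _ assms(2,3)]
  obtain C where "C > 0" and C: "\<forall>eta1 eta2 e1 e2.
      exp (- eta1) \<le> 2 \<and> exp eta2 \<le> 2 \<and> \<bar>e1\<bar> + \<bar>e2\<bar> \<le> \<delta> \<longrightarrow>
      \<bar>u_hat A k1 mu1 g1 k2 mu2 g2 zeta1 zeta2 x1 x2 \<epsilon> \<beta> eta1 eta2 e1 e2
       - u_hat A k1 mu1 g1 k2 mu2 g2 zeta1 zeta2 x1 x2 \<epsilon> \<beta> eta1 eta2 0 0\<bar> \<le> C * (\<bar>e1\<bar> + \<bar>e2\<bar>)"
    by blast
  have "exp (- eta1) \<le> 2 \<and> exp eta2 \<le> 2"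
    if "sqrt ((1 / (x1 * gamma2_hat 0) * (1 - exp (- eta1)))\<^sup>2
         + ((zeta1 - zeta2 + 1 / (x1 * gamma2_hat 0)) * (exp eta2 - 1))\<^sup>2) \<le> R" for eta1 eta2
    using abs_less_one_if_sqrt_sum_squares_le[OF that] R by (simp add: abs_less_iff)
  with \<open>C > 0\<close> C show "\<exists>C>0. \<forall>eta1 eta2 e1 e2.
       sqrt ((1 / (x1 * gamma2_hat 0) * (1 - exp (- eta1)))\<^sup>2
         + ((zeta1 - zeta2 + 1 / (x1 * gamma2_hat 0)) * (exp eta2 - 1))\<^sup>2) \<le> R
       \<and> \<bar>e1\<bar> + \<bar>e2\<bar> \<le> \<delta> \<longrightarrow>
       \<bar>u_hat A k1 mu1 g1 k2 mu2 g2 zeta1 zeta2 x1 x2 \<epsilon> \<beta> eta1 eta2 e1 e2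
         - u_hat A k1 mu1 g1 k2 mu2 g2 zeta1 zeta2 x1 x2 \<epsilon> \<beta> eta1 eta2 0 0\<bar>
       \<le> C * (\<bar>e1\<bar> + \<bar>e2\<bar>)"
    by blast
qed

end

theorem lemma2:
  fixes A :: real and k1 mu1 g1 k2 mu2 g2 :: "real \<Rightarrow> real"
    and zeta1 zeta2 \<epsilon> \<beta> x1 x2 \<delta> :: real
  assumes A_pos: "A > 0"
    and cont: "continuous_on {0..A} k1" "continuous_on {0..A} mu1" "continuous_on {0..A} g1"
              "continuous_on {0..A} k2" "continuous_on {0..A} mu2" "continuous_on {0..A} g2"
    and nonneg: "\<forall>t\<in>{0..A}. k1 t \<ge> 0 \<and> mu1 t \<ge> 0 \<and> g1 t \<ge> 0 \<and> k2 t \<ge> 0 \<and> mu2 t \<ge> 0 \<and> g2 t \<ge> 0"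
    and posint: "integral {0..A} k1 > 0" "integral {0..A} mu1 > 0" "integral {0..A} g1 > 0"
                "integral {0..A} k2 > 0" "integral {0..A} mu2 > 0" "integral {0..A} g2 > 0"
    and zeta_pos: "zeta1 > 0" "zeta2 > 0"
    and char1: "integral {0..A} (\<lambda>a. k1 a * surv mu1 zeta1 a) = 1"
    and char2: "integral {0..A} (\<lambda>a. k2 a * surv mu2 zeta2 a) = 1"
    and eps: "\<epsilon> > 0"
    and beta: "\<beta> > \<epsilon> / (4 * (1 + \<epsilon>))"
    and x1: "x1 > 1 / (zeta2 * G_gamma A g2 zeta1 mu1)"
    and b_pos: "zeta1 - zeta2 + 1 / (x1 * G_gamma A g2 zeta1 mu1) > 0"
    and x2: "zeta1 - zeta2 + 1 / (x1 * G_gamma A g2 zeta1 mu1) = G_gamma A g1 zeta2 mu2 * x2"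
    and delta: "\<delta> > 0"
  shows "\<forall>R. 0 < R \<and> R < min (1 / (x1 * G_gamma A g2 zeta1 mu1))
                         (zeta1 - zeta2 + 1 / (x1 * G_gamma A g2 zeta1 mu1)) \<longrightarrow>
          (\<exists>C>0. \<forall>eta1 eta2 e1 e2.
             sqrt (((1 / (x1 * G_gamma A g2 zeta1 mu1)) * (1 - exp (- eta1)))\<^sup>2
                 + ((zeta1 - zeta2 + 1 / (x1 * G_gamma A g2 zeta1 mu1)) * (exp eta2 - 1))\<^sup>2) \<le> R
             \<and> \<bar>e1\<bar> + \<bar>e2\<bar> \<le> \<delta> \<longrightarrow>
             \<bar>u_hat A k1 mu1 g1 k2 mu2 g2 zeta1 zeta2 x1 x2 \<epsilon> \<beta> eta1 eta2 e1 e2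
               - u_hat A k1 mu1 g1 k2 mu2 g2 zeta1 zeta2 x1 x2 \<epsilon> \<beta> eta1 eta2 0 0\<bar>
             \<le> C * (\<bar>e1\<bar> + \<bar>e2\<bar>))"
proof -
  interpret u_hat_data A k1 mu1 g1 k2 mu2 g2 zeta1 zeta2 x1 x2 \<epsilon> \<beta>
    by (rule u_hat_data.intro) (use A_pos cont nonneg in auto)
  have "kappa2_hat 0 \<noteq> 0" "pairing1_hat 0 \<noteq> 0"
    using G_kappa_pos[OF cont(4,5)] ip_G_pi_pos[OF A_pos cont(1,2)] nonneg char1 char2
    by (simp_all add: kappa2_hat_def pairing1_hat_def less_imp_neq[symmetric])
  from u_hat_lipschitz_on_T_R[OF less_imp_le[OF delta] this] show ?thesis
    by (simp add: gamma2_hat_def)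
qed

end
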